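(* Let $\bar O=O_1,\dots,O_k$ be fresh propositional constants. If $\Gamma\vdash_{\bar O}t:A;\Delta$ and $t\triangleright^*t'$, then $\Gamma\vdash_{\bar O}t':A;\Delta$.
   Context: $\lambda\mu$-terms: $t::= x\mid \lambda x.t\mid (t\;t)\mid \mu a.t\mid (a\;t)$ over disjoint infinite sets of $\lambda$-variables and $\mu$-variables. Reduction $(\lambda x.u\;v)\triangleright u[x:=v]$, $(\mu a.u\;v)\triangleright\mu a.u[a:=^*v]$ ($u[a:=^*v]$ replaces each subterm $(a\;w)$ of $u$ by $(a\;(w\;v))$), $\triangleright^*$ reflexive transitive compatible closure. Types are built from propositional variables, the constants $O_1,\dots,O_k$, and $\perp$ with $\to$. An $\bar O$-type is defined by: each $O_i$ is an $\bar O$-type; if $B$ is an $\bar O$-type then $A\to B$ is an $\bar O$-type. The system $\vdash_{\bar O}$: (ax) $\Gamma\vdash_{\bar O}x:A;\Delta$ if $x:A\in\Gamma$, provided $\Delta$ contains no declaration $a:C$ with $C$ an $\bar O$-type; ($\to_i$) from $\Gamma,x:A\vdash_{\bar O}t:B;\Delta$ infer $\Gamma\vdash_{\bar O}\lambda x.t:A\to B;\Delta$; ($\to_e$) from $\Gamma\vdash_{\bar O}u:A\to B;\Delta$ and $\Gamma\vdash_{\bar O}v:A;\Delta$ infer $\Gamma\vdash_{\bar O}(u\;v):B;\Delta$, provided $B$ is not an $\bar O$-type; ($\mu$) from $\Gamma\vdash_{\bar O}t:\perp;\Delta,a:A$ infer $\Gamma\vdash_{\bar O}\mu a.t:A;\Delta$;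 ($\perp$) from $\Gamma\vdash_{\bar O}t:A;\Delta,a:A$ infer $\Gamma\vdash_{\bar O}(a\;t):\perp;\Delta,a:A$. *)

theory Defs
  imports Main
begin

section \<open>lambda-mu terms (locally nameless via de Bruijn indices, two separate index spaces)\<close>

text \<open>LVar x : lambda-variable (de Bruijn index x);
  Lam t : \<lambda>x.t;  App u v : (u v);  Mu t : \<mu>a.t;  Named a t : (a t), a a mu-variable index.\<close>

datatype trm =
    LVar nat
  | Lam trm
  | App trm trm
  | Mu trm
  | Named nat trm

primrec liftL :: "nat \<Rightarrow> trm \<Rightarrow> trm" where
  "liftL k (LVar x) = (if x < k then LVar x else LVar (Suc x))"
| "liftL k (Lam t) = Lam (liftL (Suc k) t)"
| "liftL k (App u v) = App (liftL k u) (liftL k v)"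
| "liftL k (Mu t) = Mu (liftL k t)"
| "liftL k (Named a t) = Named a (liftL k t)"

primrec liftM :: "nat \<Rightarrow> trm \<Rightarrow> trm" where
  "liftM k (LVar x) = LVar x"
| "liftM k (Lam t) = Lam (liftM k t)"
| "liftM k (App u v) = App (liftM k u) (liftM k v)"
| "liftM k (Mu t) = Mu (liftM (Suc k) t)"
| "liftM k (Named a t) = Named (if a < k then a else Suc a) (liftM k t)"

text \<open>Ordinary substitution \<open>t[x:=s]\<close> for the lambda-variable with index k
  (free lambda-indices above k are decremented, since the binder disappears).\<close>
primrec substL :: "trm \<Rightarrow> nat \<Rightarrow> trm \<Rightarrow> trm" where
  "substL (LVar x) k s = (if x < k then LVar x else if x = k then s else LVar (x - 1))"
| "substL (Lam t) k s = Lam (substL t (Suc k) (liftL 0 s))"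
| "substL (App u v) k s = App (substL u k s) (substL v k s)"
| "substL (Mu t) k s = Mu (substL t k (liftM 0 s))"
| "substL (Named a t) k s = Named a (substL t k s)"

text \<open>Structural substitution \<open>u[a:=*v]\<close>: every subterm \<open>(a w)\<close> becomes \<open>(a (w v))\<close>;
  the mu-variable a (index k) is kept.\<close>
primrec substM :: "trm \<Rightarrow> nat \<Rightarrow> trm \<Rightarrow> trm" where
  "substM (LVar x) k v = LVar x"
| "substM (Lam t) k v = Lam (substM t k (liftL 0 v))"
| "substM (App u w) k v = App (substM u k v) (substM w k v)"
| "substM (Mu t) k v = Mu (substM t (Suc k) (liftM 0 v))"
| "substM (Named a w) k v =
     (if a = k then Named a (App (substM w k v) v) else Named a (substM w k v))"

inductive red1 :: "trm \<Rightarrow> trm \<Rightarrow> bool" (infix "\<rhd>" 50) where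
  beta: "App (Lam u) v \<rhd> substL u 0 v"
| mu:   "App (Mu u) v \<rhd> Mu (substM u 0 (liftM 0 v))"
| lam:  "t \<rhd> t' \<Longrightarrow> Lam t \<rhd> Lam t'"
| appL: "u \<rhd> u' \<Longrightarrow> App u v \<rhd> App u' v"
| appR: "v \<rhd> v' \<Longrightarrow> App u v \<rhd> App u v'"
| muc:  "t \<rhd> t' \<Longrightarrow> Mu t \<rhd> Mu t'"
| named: "t \<rhd> t' \<Longrightarrow> Named a t \<rhd> Named a t'"

abbreviation red :: "trm \<Rightarrow> trm \<Rightarrow> bool" (infix "\<rhd>\<^sup>*" 50) where
  "t \<rhd>\<^sup>* t' \<equiv> red1\<^sup>*\<^sup>* t t'"

text \<open>PVar n: propositional variables; OC i: the constant O_i; Bot: \<bottom>.\<close>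
datatype ty =
    PVar nat
  | OC nat
  | Bot
  | Arr ty ty

fun Otype :: "nat \<Rightarrow> ty \<Rightarrow> bool" where
  "Otype k (OC i) = (1 \<le> i \<and> i \<le> k)"
| "Otype k (Arr A B) = Otype k B"
| "Otype k _ = False"

text \<open>Gamma: list of types of the free lambda-variables (index x has type Gamma!x);
  Delta: list of types of the free mu-variables.\<close>
inductive typing :: "nat \<Rightarrow> ty list \<Rightarrow> trm \<Rightarrow> ty \<Rightarrow> ty list \<Rightarrow> bool" where
  ax:  "\<lbrakk>x < length \<Gamma>; \<Gamma> ! x = A; \<forall>C \<in> set \<Delta>. \<not> Otype k C\<rbrakk>
          \<Longrightarrow> typing k \<Gamma> (LVar x) A \<Delta>"
| arrI: "typing k (A # \<Gamma>) t B \<Delta> \<Longrightarrow> typing k \<Gamma> (Lam t) (Arr A B) \<Delta>"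
| arrE: "\<lbrakk>typing k \<Gamma> u (Arr A B) \<Delta>; typing k \<Gamma> v A \<Delta>; \<not> Otype k B\<rbrakk>
          \<Longrightarrow> typing k \<Gamma> (App u v) B \<Delta>"
| muI: "typing k \<Gamma> t Bot (A # \<Delta>) \<Longrightarrow> typing k \<Gamma> (Mu t) A \<Delta>"
| botI: "\<lbrakk>a < length \<Delta>; \<Delta> ! a = A; typing k \<Gamma> t A \<Delta>\<rbrakk>
          \<Longrightarrow> typing k \<Gamma> (Named a t) Bot \<Delta>"

end

theory Submission
  imports Defs
begin

text \<open>Subject reduction is proved in the usual way, from weakening and a substitution lemma for
  each of the two kinds of substitution. The restrictions of \<open>\<turnstile>\<^sub>O\<close> are compatible with this:
  the side condition of \<open>(\<rightarrow>\<^sub>e)\<close> on \<open>(\<mu>a.u v)\<close> says that the result type \<open>B\<close> is not an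
  \<open>O\<close>-type, so retyping \<open>a\<close> from \<open>A \<rightarrow> B\<close> to \<open>B\<close> keeps the \<open>\<mu>\<close>-context free of \<open>O\<close>-types,
  as the axiom rule demands, and the new applications \<open>(w v) : B\<close> created by \<open>u[a:=\<^sup>*v]\<close> are
  again instances of \<open>(\<rightarrow>\<^sub>e)\<close>.\<close>

lemma typing_mu_context_not_Otype:
  "typing k \<Gamma> t A \<Delta> \<Longrightarrow> C \<in> set \<Delta> \<Longrightarrow> \<not> Otype k C"
  by (induction rule: typing.induct) auto

lemma nth_insert_below: "x < j \<Longrightarrow> j \<le> length xs \<Longrightarrow> (take j xs @ y # drop j xs) ! x = xs ! x"
  by (simp add: nth_append)

lemma nth_insert_at: "j \<le> length xs \<Longrightarrow> (take j xs @ y # drop j xs) ! j = y"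
  by (simp add: nth_append)

lemma nth_insert_above:
  "j < x \<Longrightarrow> x \<le> length xs \<Longrightarrow> (take j xs @ y # drop j xs) ! x = xs ! (x - 1)"
  by (cases x) (auto simp add: nth_append min_def)

lemma typing_liftL:
  assumes "typing k \<Gamma> t A \<Delta>" and "j \<le> length \<Gamma>"
  shows "typing k (take j \<Gamma> @ B # drop j \<Gamma>) (liftL j t) A \<Delta>"
  using assms
proof (induction arbitrary: j rule: typing.induct)
  case (ax x \<Gamma> A \<Delta> k)
  show ?case
  proof (cases "x < j")
    case True
    then show ?thesis using ax by (auto intro!: typing.ax simp: nth_insert_below)
  next
    case False
    then have "(take j \<Gamma> @ B # drop j \<Gamma>) ! Suc x = \<Gamma> ! x"
      using ax by (subst nth_insert_above) auto
    then show ?thesis using False ax by (auto intro!: typing.ax)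
  qed
next
  case (arrI k A \<Gamma> t B' \<Delta>)
  then have "typing k (A # take j \<Gamma> @ B # drop j \<Gamma>) (liftL (Suc j) t) B' \<Delta>"
    using arrI.IH[of "Suc j"] by simp
  then show ?case by (simp add: typing.arrI)
qed (auto intro: typing.intros)

lemma typing_liftM:
  assumes "typing k \<Gamma> t A \<Delta>" and "j \<le> length \<Delta>" and "\<not> Otype k B"
  shows "typing k \<Gamma> (liftM j t) A (take j \<Delta> @ B # drop j \<Delta>)"
  using assms
proof (induction arbitrary: j rule: typing.induct)
  case (ax x \<Gamma> A \<Delta> k)
  have "\<forall>C \<in> set (take j \<Delta> @ B # drop j \<Delta>). \<not> Otype k C"
    using ax by (auto dest: in_set_takeD in_set_dropD)
  then show ?case using ax by (simp add: typing.ax)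
next
  case (muI k \<Gamma> t A \<Delta>)
  then have "typing k \<Gamma> (liftM (Suc j) t) Bot (A # take j \<Delta> @ B # drop j \<Delta>)"
    using muI.IH[of "Suc j"] by simp
  then show ?case by (simp add: typing.muI)
next
  case (botI a \<Delta> A k \<Gamma> t)
  show ?case
  proof (cases "a < j")
    case True
    then show ?thesis using botI by (auto intro!: typing.botI simp: nth_insert_below)
  next
    case False
    then have "(take j \<Delta> @ B # drop j \<Delta>) ! Suc a = \<Delta> ! a"
      using botI by (subst nth_insert_above) auto
    then show ?thesis using False botI by (auto intro!: typing.botI)
  qed
qed (auto intro: typing.intros)

lemma typing_substL:
  assumes "typing k (take j \<Gamma> @ A # drop j \<Gamma>) u C \<Delta>" and "j \<le> length \<Gamma>"
    and "typing k \<Gamma> s A \<Delta>"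
  shows "typing k \<Gamma> (substL u j s) C \<Delta>"
proof -
  have "typing k \<Gamma>' u C \<Delta> \<Longrightarrow> \<Gamma>' = take j \<Gamma> @ A # drop j \<Gamma> \<Longrightarrow> j \<le> length \<Gamma>
    \<Longrightarrow> typing k \<Gamma> s A \<Delta> \<Longrightarrow> typing k \<Gamma> (substL u j s) C \<Delta>" for \<Gamma>'
  proof (induction arbitrary: \<Gamma> j s rule: typing.induct)
    case (ax x \<Gamma>' C' \<Delta> k)
    consider "x < j" | "x = j" | "j < x" by linarith
    then show ?case
    proof cases
      case 1
      then show ?thesis using ax by (auto intro!: typing.ax simp: nth_insert_below)
    next
      case 2
      then show ?thesis using ax by (simp add: nth_insert_at)
    next
      case 3
      then show ?thesis using ax by (auto intro!: typing.ax simp: nth_insert_above)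
    qed
  next
    case (arrI k A' \<Gamma>' t B \<Delta>)
    have "typing k (A' # \<Gamma>) (liftL 0 s) A \<Delta>"
      using typing_liftL[OF arrI.prems(3), of 0 A'] by simp
    then have "typing k (A' # \<Gamma>) (substL t (Suc j) (liftL 0 s)) B \<Delta>"
      using arrI by simp
    then show ?case by (simp add: typing.arrI)
  next
    case (muI k \<Gamma>' t A' \<Delta>)
    have "\<not> Otype k A'"
      using typing_mu_context_not_Otype[OF muI.hyps] by simp
    then have "typing k \<Gamma> (liftM 0 s) A (A' # \<Delta>)"
      using typing_liftM[OF muI.prems(3), of 0 A'] by simp
    then have "typing k \<Gamma> (substL t j (liftM 0 s)) Bot (A' # \<Delta>)"
      using muI by simp
    then show ?case by (simp add: typing.muI)
  next
    case (arrE k \<Gamma>' u A' B \<Delta> v)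
    have "typing k \<Gamma> (substL u j s) (Arr A' B) \<Delta>" by (rule arrE.IH(1)[OF arrE.prems])
    moreover have "typing k \<Gamma> (substL v j s) A' \<Delta>" by (rule arrE.IH(2)[OF arrE.prems])
    ultimately show ?case using arrE.hyps(3) by (simp add: typing.arrE)
  qed (auto intro: typing.intros)
  then show ?thesis using assms by blast
qed

lemma typing_substM:
  assumes "typing k \<Gamma> u C \<Delta>" and "j < length \<Delta>" and "\<Delta> ! j = Arr A B"
    and "\<not> Otype k B" and "typing k \<Gamma> v A (\<Delta>[j := B])"
  shows "typing k \<Gamma> (substM u j v) C (\<Delta>[j := B])"
  using assms
proof (induction arbitrary: j v rule: typing.induct)
  case (ax x \<Gamma> C' \<Delta> k)
  then show ?case
    by (auto intro!: typing.ax dest: set_update_subset_insert[THEN subsetD])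
next
  case (arrI k A' \<Gamma> t B' \<Delta>)
  have "typing k (A' # \<Gamma>) (liftL 0 v) A (\<Delta>[j := B])"
    using typing_liftL[OF arrI.prems(4), of 0 A'] by simp
  then have "typing k (A' # \<Gamma>) (substM t j (liftL 0 v)) B' (\<Delta>[j := B])"
    using arrI by simp
  then show ?case by (simp add: typing.arrI)
next
  case (muI k \<Gamma> t A' \<Delta>)
  have "\<not> Otype k A'"
    using typing_mu_context_not_Otype[OF muI.hyps] by simp
  then have "typing k \<Gamma> (liftM 0 v) A (A' # \<Delta>[j := B])"
    using typing_liftM[OF muI.prems(4), of 0 A'] by simp
  then have "typing k \<Gamma> (substM t (Suc j) (liftM 0 v)) Bot ((A' # \<Delta>)[Suc j := B])"
    using muI.IH[of "Suc j" "liftM 0 v"] muI.prems by simp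
  then show ?case by (simp add: typing.muI)
next
  case (botI a \<Delta> A' k \<Gamma> t)
  show ?case
  proof (cases "a = j")
    case True
    then have "typing k \<Gamma> (substM t j v) (Arr A B) (\<Delta>[j := B])"
      using botI by simp
    then have "typing k \<Gamma> (App (substM t j v) v) B (\<Delta>[j := B])"
      using botI by (auto intro: typing.arrE)
    then show ?thesis using True botI by (auto intro!: typing.botI)
  next
    case False
    then show ?thesis using botI by (auto intro!: typing.botI)
  qed
next
  case (arrE k \<Gamma> u A' B' \<Delta> w)
  have "typing k \<Gamma> (substM u j v) (Arr A' B') (\<Delta>[j := B])"
    by (rule arrE.IH(1)[OF arrE.prems])
  moreover have "typing k \<Gamma> (substM w j v) A' (\<Delta>[j := B])"
    by (rule arrE.IH(2)[OF arrE.prems])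
  ultimately show ?case using arrE.hyps(3) by (simp add: typing.arrE)
qed

inductive_cases typing_AppE: "typing k \<Gamma> (App u v) A \<Delta>"
inductive_cases typing_LamE: "typing k \<Gamma> (Lam u) A \<Delta>"
inductive_cases typing_MuE: "typing k \<Gamma> (Mu u) A \<Delta>"
inductive_cases typing_NamedE: "typing k \<Gamma> (Named a u) A \<Delta>"

lemma typing_red1:
  assumes "t \<rhd> t'" and "typing k \<Gamma> t A \<Delta>"
  shows "typing k \<Gamma> t' A \<Delta>"
  using assms
proof (induction arbitrary: \<Gamma> A \<Delta> rule: red1.induct)
  case (beta u v)
  then obtain A' where u: "typing k \<Gamma> (Lam u) (Arr A' A) \<Delta>" and v: "typing k \<Gamma> v A' \<Delta>"
    by (rule typing_AppE)
  from u have "typing k (A' # \<Gamma>) u A \<Delta>"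
    by (rule typing_LamE) simp
  then show ?case
    using typing_substL[of k 0 \<Gamma> A' u A \<Delta> v] v by simp
next
  case (mu u v)
  then obtain A' where u: "typing k \<Gamma> (Mu u) (Arr A' A) \<Delta>" and v: "typing k \<Gamma> v A' \<Delta>"
    and not_O: "\<not> Otype k A"
    by (rule typing_AppE)
  from u have "typing k \<Gamma> u Bot (Arr A' A # \<Delta>)"
    by (rule typing_MuE) simp
  moreover have "typing k \<Gamma> (liftM 0 v) A' (A # \<Delta>)"
    using typing_liftM[OF v, of 0 A] not_O by simp
  ultimately have "typing k \<Gamma> (substM u 0 (liftM 0 v)) Bot (A # \<Delta>)"
    using typing_substM[of k \<Gamma> u Bot "Arr A' A # \<Delta>" 0 A' A] not_O by simp
  then show ?case by (rule typing.muI)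
next
  case (lam t t')
  then show ?case by (metis typing_LamE typing.arrI)
next
  case (appL u u' v)
  then show ?case by (metis typing_AppE typing.arrE)
next
  case (appR v v' u)
  then show ?case by (metis typing_AppE typing.arrE)
next
  case (muc t t')
  then show ?case by (metis typing_MuE typing.muI)
next
  case (named t t' a)
  then show ?case by (metis typing_NamedE typing.botI)
qed

theorem mainTheorem17:
  assumes "typing k \<Gamma> t A \<Delta>"
      and "t \<rhd>\<^sup>* t'"
  shows "typing k \<Gamma> t' A \<Delta>"
  using assms(2,1) by (induction rule: rtranclp_induct) (auto intro: typing_red1)

end
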